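(* Let $n\ge 1$ and let $a=(a_1,\dots,a_n)$ be a good sequence of $[n]$. Then: (1) the sequence $b=(b_1,\dots,b_n)$ with $b_i=n+1-a_i$ is a good sequence; (2) if $a_{2l+1}\ge \lceil \frac{n+1}{2}\rceil$ for all $l$ with $2l+1\in[n]$, then the sequence $b$ defined by $b_{2l+1}=a_{2l+1}-\lfloor \frac n2\rfloor$ (for $2l+1\in[n]$) and $b_{2l}=a_{2l}+\lfloor\frac{n+1}{2}\rfloor$ (for $2l\in[n]$) is a good sequence; (3) if $a_{2l+1}\le \lfloor \frac{n+1}{2}\rfloor$ for all $l$ with $2l+1\in[n]$, then the sequence $b$ defined by $b_{2l+1}=a_{2l+1}+\lfloor \frac n2\rfloor$ (for $2l+1\in[n]$) and $b_{2l}=a_{2l}-\lfloor\frac{n+1}{2}\rfloor$ (for $2l\in[n]$) is a good sequence.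
   Context: $[n]=\{1,2,\dots,n\}$. A permutation $a=(a_1,\dots,a_n)$ of $[n]$ is a good sequence if the differences $|a_2-a_1|,\dots,|a_n-a_{n-1}|$ are pairwise distinct and one of the following holds: (i) $a_{2l+1}\ge\lceil\frac{n+1}{2}\rceil$ and $a_{2l}<\lceil\frac{n+1}{2}\rceil$ whenever the indices $2l+1,2l$ lie in $[n]$; or (ii) $a_{2l+1}\le\lfloor\frac{n+1}{2}\rfloor$ and $a_{2l}>\lfloor\frac{n+1}{2}\rfloor$ whenever the indices $2l+1,2l$ lie in $[n]$. (Here $l\ge 0$ is an integer, so odd positions include position $1$.) *)

theory Defs
  imports Main
begin

text \<open>A sequence (a_1,...,a_n) is represented by a function a :: nat => nat, of
  which only the values on the indices 1..n matter.\<close>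

definition is_perm :: "nat \<Rightarrow> (nat \<Rightarrow> nat) \<Rightarrow> bool" where
  "is_perm n a \<longleftrightarrow> bij_betw a {1..n} {1..n}"

definition distinct_diffs :: "nat \<Rightarrow> (nat \<Rightarrow> nat) \<Rightarrow> bool" where
  "distinct_diffs n a \<longleftrightarrow>
     inj_on (\<lambda>i. \<bar>int (a (i + 1)) - int (a i)\<bar>) {1..<n}"

text \<open>ceil((n+1)/2) = (n+2) div 2,  floor((n+1)/2) = (n+1) div 2.\<close>

definition cond_i :: "nat \<Rightarrow> (nat \<Rightarrow> nat) \<Rightarrow> bool" where
  "cond_i n a \<longleftrightarrow> (\<forall>i\<in>{1..n}.
      (odd i \<longrightarrow> a i \<ge> (n + 2) div 2) \<and> (even i \<longrightarrow> a i < (n + 2) div 2))"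

definition cond_ii :: "nat \<Rightarrow> (nat \<Rightarrow> nat) \<Rightarrow> bool" where
  "cond_ii n a \<longleftrightarrow> (\<forall>i\<in>{1..n}.
      (odd i \<longrightarrow> a i \<le> (n + 1) div 2) \<and> (even i \<longrightarrow> a i > (n + 1) div 2))"

definition good_seq :: "nat \<Rightarrow> (nat \<Rightarrow> nat) \<Rightarrow> bool" where
  "good_seq n a \<longleftrightarrow> is_perm n a \<and> distinct_diffs n a \<and> (cond_i n a \<or> cond_ii n a)"

end

theory Submission
  imports Defs
begin

text \<open>Two symmetries of {1..n} do all the work. Reflecting the values, x \<mapsto> n + 1 - x, keeps every
  difference and exchanges the two parity conditions. Under condition (i) odd positions carry
  exactly the upper half of the values, so the map in (2) is the permutation of {1..n} that moves
  the upper half {\<lfloor>n/2\<rfloor>+1..n} down onto {1..\<lceil>n/2\<rceil>} and the lower half up onto the rest;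
  across the two halves it turns a difference d into n - d, which is still injective. Part (3) is
  part (2) conjugated by the reflection. The hypotheses of (2) and (3) only constrain odd positions,
  but together with one of the two conditions they pin all odd values to the middle value, which
  for an injective sequence forces n = 1.\<close>

lemma good_seq_cong:
  assumes "\<And>i. i \<in> {1..n} \<Longrightarrow> a i = b i"
  shows "good_seq n a = good_seq n b"
proof -
  have "is_perm n a = is_perm n b"
    unfolding is_perm_def using assms by (rule bij_betw_cong)
  moreover have "distinct_diffs n a = distinct_diffs n b"
    unfolding distinct_diffs_def using assms by (intro inj_on_cong) auto
  moreover have "cond_i n a = cond_i n b" "cond_ii n a = cond_ii n b"
    unfolding cond_i_def cond_ii_def using assms by auto
  ultimately show ?thesis
    unfolding good_seq_def by simp
qed

lemma is_perm_range: "is_perm n a \<Longrightarrow> i \<in> {1..n} \<Longrightarrow> a i \<in> {1..n}"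
  unfolding is_perm_def bij_betw_def by blast

lemma is_perm_comp:
  "is_perm n a \<Longrightarrow> bij_betw f {1..n} {1..n} \<Longrightarrow> is_perm n (\<lambda>i. f (a i))"
  unfolding is_perm_def using bij_betw_trans[of a "{1..n}" "{1..n}" f "{1..n}"]
  by (simp add: comp_def)

lemma distinct_diffs_transfer:
  assumes "distinct_diffs n a" and "inj g"
    and "\<And>i. i \<in> {1..<n} \<Longrightarrow>
      \<bar>int (b (i + 1)) - int (b i)\<bar> = g \<bar>int (a (i + 1)) - int (a i)\<bar>"
  shows "distinct_diffs n b"
  unfolding distinct_diffs_def
proof (rule inj_onI)
  fix i j assume i: "i \<in> {1..<n}" and j: "j \<in> {1..<n}"
    and "\<bar>int (b (i + 1)) - int (b i)\<bar> = \<bar>int (b (j + 1)) - int (b j)\<bar>"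
  then have "g \<bar>int (a (i + 1)) - int (a i)\<bar> = g \<bar>int (a (j + 1)) - int (a j)\<bar>"
    using assms(3)[OF i] assms(3)[OF j] by simp
  then have "\<bar>int (a (i + 1)) - int (a i)\<bar> = \<bar>int (a (j + 1)) - int (a j)\<bar>"
    using \<open>inj g\<close> by (simp add: inj_eq)
  with \<open>distinct_diffs n a\<close> i j show "i = j"
    unfolding distinct_diffs_def by (blast dest: inj_onD)
qed

lemma bij_betw_reflect: "bij_betw (\<lambda>x. n + 1 - x) {1..n} {1..(n::nat)}"
  by (rule bij_betw_byWitness[where f' = "\<lambda>x. n + 1 - x"]) auto

lemma cond_ii_reflect: "cond_i n a \<Longrightarrow> cond_ii n (\<lambda>i. n + 1 - a i)"
  unfolding cond_i_def cond_ii_def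
proof (intro ballI conjI impI)
  fix i assume "\<forall>i\<in>{1..n}. (odd i \<longrightarrow> (n + 2) div 2 \<le> a i) \<and> (even i \<longrightarrow> a i < (n + 2) div 2)"
    and i: "i \<in> {1..n}"
  then have "odd i \<Longrightarrow> (n + 2) div 2 \<le> a i" "even i \<Longrightarrow> a i < (n + 2) div 2" by auto
  then show "odd i \<Longrightarrow> n + 1 - a i \<le> (n + 1) div 2" "even i \<Longrightarrow> (n + 1) div 2 < n + 1 - a i"
    by linarith+
qed

lemma cond_i_reflect:
  "(\<And>i. i \<in> {1..n} \<Longrightarrow> a i \<le> n) \<Longrightarrow> cond_ii n a \<Longrightarrow> cond_i n (\<lambda>i. n + 1 - a i)"
  unfolding cond_i_def cond_ii_def
proof (intro ballI conjI impI)
  fix i assume "\<And>i. i \<in> {1..n} \<Longrightarrow> a i \<le> n"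
    and "\<forall>i\<in>{1..n}. (odd i \<longrightarrow> a i \<le> (n + 1) div 2) \<and> (even i \<longrightarrow> (n + 1) div 2 < a i)"
    and i: "i \<in> {1..n}"
  then have "a i \<le> n" "odd i \<Longrightarrow> a i \<le> (n + 1) div 2" "even i \<Longrightarrow> (n + 1) div 2 < a i"
    by auto
  then show "odd i \<Longrightarrow> (n + 2) div 2 \<le> n + 1 - a i" "even i \<Longrightarrow> n + 1 - a i < (n + 2) div 2"
    by linarith+
qed

lemma good_seq_reflect:
  assumes "good_seq n a"
  shows "good_seq n (\<lambda>i. n + 1 - a i)"
proof -
  have perm: "is_perm n a" and dd: "distinct_diffs n a" and cond: "cond_i n a \<or> cond_ii n a"
    using assms unfolding good_seq_def by auto
  have le_n: "a i \<le> n" if "i \<in> {1..n}" for i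
    using is_perm_range[OF perm that] by simp
  have "distinct_diffs n (\<lambda>i. n + 1 - a i)"
    using dd inj_on_id
  proof (rule distinct_diffs_transfer)
    fix i assume "i \<in> {1..<n}"
    then have "a i \<le> n" "a (i + 1) \<le> n" by (simp_all add: le_n)
    then show "\<bar>int (n + 1 - a (i + 1)) - int (n + 1 - a i)\<bar> = id \<bar>int (a (i + 1)) - int (a i)\<bar>"
      by (simp add: of_nat_diff)
  qed
  moreover have "cond_i n (\<lambda>i. n + 1 - a i) \<or> cond_ii n (\<lambda>i. n + 1 - a i)"
    using cond cond_ii_reflect cond_i_reflect le_n by blast
  ultimately show ?thesis
    using is_perm_comp[OF perm bij_betw_reflect] unfolding good_seq_def by blast
qed

definition swap_halves :: "nat \<Rightarrow> nat \<Rightarrow> nat" where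
  "swap_halves n x = (if n div 2 < x then x - n div 2 else x + (n + 1) div 2)"

lemma bij_betw_swap_halves: "bij_betw (swap_halves n) {1..n} {1..n}"
  by (rule bij_betw_byWitness[where
        f' = "\<lambda>y. if y \<le> (n + 1) div 2 then y + n div 2 else y - (n + 1) div 2"])
    (auto simp: swap_halves_def)

lemma swap_halves_diff:
  assumes "x \<in> {1..n}" "y \<in> {1..n}" "x \<le> n div 2 \<longleftrightarrow> n div 2 < y"
  shows "\<bar>int (swap_halves n y) - int (swap_halves n x)\<bar> = int n - \<bar>int y - int x\<bar>"
proof -
  have "n div 2 + (n + 1) div 2 = n" by presburger
  then show ?thesis
    using assms by (cases "x \<le> n div 2") (simp_all add: swap_halves_def of_nat_diff)
qed

lemma cond_i_parity_eq_half:
  assumes "cond_i n a" and "i \<in> {1..n}"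
  shows "odd i \<longleftrightarrow> n div 2 < a i"
proof -
  have "odd i \<Longrightarrow> (n + 2) div 2 \<le> a i" "even i \<Longrightarrow> a i < (n + 2) div 2"
    using assms unfolding cond_i_def by auto
  moreover have "(n + 2) div 2 = n div 2 + 1" by simp
  ultimately show ?thesis by (cases "odd i") auto
qed

lemma cond_ii_swap_halves:
  assumes cond: "cond_i n a" and range: "\<And>i. i \<in> {1..n} \<Longrightarrow> a i \<in> {1..n}"
  shows "cond_ii n (\<lambda>i. swap_halves n (a i))"
  unfolding cond_ii_def
proof (intro ballI conjI impI)
  fix i assume i: "i \<in> {1..n}"
  have n: "n div 2 + (n + 1) div 2 = n" by presburger
  have "a i \<le> n" "1 \<le> a i" using range[OF i] by auto
  then show "odd i \<Longrightarrow> swap_halves n (a i) \<le> (n + 1) div 2"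
    "even i \<Longrightarrow> (n + 1) div 2 < swap_halves n (a i)"
    using cond_i_parity_eq_half[OF cond i] n unfolding swap_halves_def by auto
qed

lemma good_seq_swap_halves:
  assumes "good_seq n a" and cond: "cond_i n a"
  shows "good_seq n (\<lambda>i. if odd i then a i - n div 2 else a i + (n + 1) div 2)"
proof -
  have perm: "is_perm n a" and dd: "distinct_diffs n a"
    using assms unfolding good_seq_def by auto
  note half = cond_i_parity_eq_half[OF cond]
  note range = is_perm_range[OF perm]
  let ?b = "\<lambda>i. swap_halves n (a i)"
  have "distinct_diffs n ?b"
    using dd
  proof (rule distinct_diffs_transfer[where g = "\<lambda>d. int n - d"])
    show "inj (\<lambda>d. int n - d)" by (simp add: inj_def)
  next
    fix i assume "i \<in> {1..<n}"
    then have i: "i \<in> {1..n}" "i + 1 \<in> {1..n}" by auto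
    have "a i \<le> n div 2 \<longleftrightarrow> n div 2 < a (i + 1)"
      using half[OF i(1)] half[OF i(2)] by auto
    then show "\<bar>int (?b (i + 1)) - int (?b i)\<bar> = int n - \<bar>int (a (i + 1)) - int (a i)\<bar>"
      using range[OF i(1)] range[OF i(2)] by (rule swap_halves_diff[rotated 2])
  qed
  moreover have "cond_ii n ?b"
    using cond range by (rule cond_ii_swap_halves)
  ultimately have "good_seq n ?b"
    using is_perm_comp[OF perm bij_betw_swap_halves] unfolding good_seq_def by blast
  moreover have "good_seq n ?b
      = good_seq n (\<lambda>i. if odd i then a i - n div 2 else a i + (n + 1) div 2)"
    by (rule good_seq_cong) (simp add: half swap_halves_def)
  ultimately show ?thesis by simp
qed

lemma good_seq_swap_halves_inverse:
  assumes good: "good_seq n a" and cond: "cond_ii n a"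
  shows "good_seq n (\<lambda>i. if odd i then a i + n div 2 else a i - (n + 1) div 2)"
proof -
  have range: "\<And>i. i \<in> {1..n} \<Longrightarrow> a i \<in> {1..n}"
    using good is_perm_range unfolding good_seq_def by blast
  let ?c = "\<lambda>i. n + 1 - a i"
  let ?d = "\<lambda>i. if odd i then ?c i - n div 2 else ?c i + (n + 1) div 2"
  have "cond_i n ?c"
    using range cond by (intro cond_i_reflect) auto
  with good_seq_reflect[OF good] have "good_seq n (\<lambda>i. n + 1 - ?d i)"
    by (rule good_seq_reflect[OF good_seq_swap_halves])
  moreover have "n + 1 - ?d i = (if odd i then a i + n div 2 else a i - (n + 1) div 2)"
    if i: "i \<in> {1..n}" for i
  proof (cases "odd i")
    case True
    then have "1 \<le> a i" "a i \<le> (n + 1) div 2"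
      using range[OF i] cond i unfolding cond_ii_def by auto
    with True show ?thesis by simp
  next
    case False
    then have "a i \<le> n" "(n + 1) div 2 < a i"
      using range[OF i] cond i unfolding cond_ii_def by auto
    with False show ?thesis by simp
  qed
  ultimately show ?thesis
    using good_seq_cong[of n "\<lambda>i. n + 1 - ?d i"] by simp
qed

lemma odd_values_middle_imp_le_1:
  fixes a :: "nat \<Rightarrow> nat"
  assumes "inj_on a {1..n}"
    and middle: "\<And>i. i \<in> {1..n} \<Longrightarrow> odd i \<Longrightarrow> (n + 2) div 2 \<le> a i \<and> a i \<le> (n + 1) div 2"
  shows "n \<le> 1"
proof (rule ccontr)
  assume "\<not> n \<le> 1"
  have a1: "(n + 2) div 2 \<le> a 1 \<and> a 1 \<le> (n + 1) div 2"
    using \<open>\<not> n \<le> 1\<close> by (intro middle) auto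
  then have "3 \<le> n" and mid: "(n + 2) div 2 = (n + 1) div 2"
    using \<open>\<not> n \<le> 1\<close> by presburger+
  have a3: "(n + 2) div 2 \<le> a 3 \<and> a 3 \<le> (n + 1) div 2"
    using \<open>3 \<le> n\<close> by (intro middle) auto
  have "a 1 = a 3"
    using a1 a3 mid by linarith
  with \<open>3 \<le> n\<close> \<open>inj_on a {1..n}\<close> show False
    by (auto dest: inj_onD)
qed

lemma cond_i_if_odd_upper:
  assumes good: "good_seq n a"
    and odd_upper: "\<forall>i\<in>{1..n}. odd i \<longrightarrow> a i \<ge> (n + 2) div 2"
  shows "cond_i n a"
  using good unfolding good_seq_def
proof (elim conjE disjE)
  assume perm: "is_perm n a" and "cond_ii n a"
  then have "n \<le> 1"
    using odd_upper unfolding is_perm_def bij_betw_def cond_ii_def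
    by (intro odd_values_middle_imp_le_1) auto
  then show "cond_i n a"
    using is_perm_range[OF perm] unfolding cond_i_def by fastforce
qed

lemma cond_ii_if_odd_lower:
  assumes good: "good_seq n a"
    and odd_lower: "\<forall>i\<in>{1..n}. odd i \<longrightarrow> a i \<le> (n + 1) div 2"
  shows "cond_ii n a"
  using good unfolding good_seq_def
proof (elim conjE disjE)
  assume perm: "is_perm n a" and "cond_i n a"
  then have "n \<le> 1"
    using odd_lower unfolding is_perm_def bij_betw_def cond_i_def
    by (intro odd_values_middle_imp_le_1) auto
  then show "cond_ii n a"
    using is_perm_range[OF perm] unfolding cond_ii_def by fastforce
qed

theorem lemma1:
  fixes n :: nat and a :: "nat \<Rightarrow> nat"
  assumes "n \<ge> 1" and "good_seq n a"
  shows "good_seq n (\<lambda>i. n + 1 - a i)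
    \<and> ((\<forall>i\<in>{1..n}. odd i \<longrightarrow> a i \<ge> (n + 2) div 2) \<longrightarrow>
         good_seq n (\<lambda>i. if odd i then a i - n div 2 else a i + (n + 1) div 2))
    \<and> ((\<forall>i\<in>{1..n}. odd i \<longrightarrow> a i \<le> (n + 1) div 2) \<longrightarrow>
         good_seq n (\<lambda>i. if odd i then a i + n div 2 else a i - (n + 1) div 2))"
  using good_seq_reflect[OF assms(2)]
    good_seq_swap_halves[OF assms(2) cond_i_if_odd_upper[OF assms(2)]]
    good_seq_swap_halves_inverse[OF assms(2) cond_ii_if_odd_lower[OF assms(2)]]
  by blast

end
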